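(* Let $n\geq 2$. If $A$ is an $L_n$-good $n\times n$ matrix, then so is every matrix obtained from $A$ by a cyclic permutation of its rows, i.e. every matrix $B$ with rows $B_i=A_{i+k}$ ($1\leq i\leq n$, indices taken modulo $n$ in $\{1,\ldots,n\}$) for some fixed integer $k$. In particular, the matrix $C$ with $C_{i,n+1-i}=1$ for $1\leq i\leq n$ and all other entries $0$ is $L_n$-good.
   Context: For $n\geq 2$, the Lucas cube $L_n$ is identified with the set of vectors $\vec{x}=(x_1,\ldots,x_n)\in\mathbb{Z}_2^n$ with no two cyclically adjacent ones: there is no $i\in\{1,\ldots,n-1\}$ with $x_i=x_{i+1}=1$, and not both $x_1=1$ and $x_n=1$. An $n\times n$ matrix $A$ over $\mathbb{Z}_2$ is $L_n$-good if it is invertible and $A\vec{x}\in L_n$ for all $\vec{x}\in L_n$. $A_i$ denotes the $i$-th row of $A$. *)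

theory Defs
  imports "Jordan_Normal_Form.Matrix" "HOL-Library.Z2"
begin

text \<open>Vectors in Z_2^n are bit vectors of dimension n, indexed 0..n-1
  (paper index i corresponds to index i-1 here).\<close>

definition lucas_cube :: "nat \<Rightarrow> bit vec set" where
  "lucas_cube n = {x. dim_vec x = n
      \<and> (\<forall>i. i + 1 < n \<longrightarrow> \<not> (x $ i = 1 \<and> x $ (i + 1) = 1))
      \<and> \<not> (x $ 0 = 1 \<and> x $ (n - 1) = 1)}"

definition Ln_good :: "nat \<Rightarrow> bit mat \<Rightarrow> bool" where
  "Ln_good n A \<longleftrightarrow> A \<in> carrier_mat n n \<and> invertible_mat A
      \<and> (\<forall>x \<in> lucas_cube n. A *\<^sub>v x \<in> lucas_cube n)"

definition row_shift :: "nat \<Rightarrow> int \<Rightarrow> bit mat \<Rightarrow> bit mat" where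
  "row_shift n k A = mat n n (\<lambda>(i, j). A $$ (nat ((int i + k) mod int n), j))"

definition antidiag :: "nat \<Rightarrow> bit mat" where
  "antidiag n = mat n n (\<lambda>(i, j). if j = n - 1 - i then 1 else 0)"

end

theory Submission imports Defs begin

text \<open>
  For a permutation \<open>\<sigma>\<close> of the indices let \<open>P\<close> be the matrix with \<open>(P x) i = x (\<sigma> i)\<close>.
  The Lucas cube consists of the vectors with no ones at two adjacent vertices of the cycle graph
  on the indices, so \<open>P\<close> is \<open>L\<^sub>n\<close>-good whenever \<open>\<sigma>\<close> is an automorphism of that cycle.
  A cyclic row shift of \<open>A\<close> is \<open>P A\<close> for a rotation \<open>\<sigma>\<close>, the anti-diagonal matrix is \<open>P\<close> for
  the reflection \<open>i \<mapsto> n - 1 - i\<close>, and \<open>L\<^sub>n\<close>-good matrices are closed under products.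
\<close>

definition perm_mat :: "nat \<Rightarrow> (nat \<Rightarrow> nat) \<Rightarrow> 'a :: semiring_1 mat" where
  "perm_mat n f = mat n n (\<lambda>(i, j). if j = f i then 1 else 0)"

lemma perm_mat_carrier [simp]: "perm_mat n f \<in> carrier_mat n n"
  and dim_row_perm_mat [simp]: "dim_row (perm_mat n f) = n"
  and dim_col_perm_mat [simp]: "dim_col (perm_mat n f) = n"
  unfolding perm_mat_def by simp_all

lemma row_perm_mat: "i < n \<Longrightarrow> row (perm_mat n f) i = unit_vec n (f i)"
  unfolding perm_mat_def by (intro eq_vecI) (auto simp: unit_vec_def)

lemma perm_mat_mult_mat:
  assumes f: "f ` {..<n} \<subseteq> {..<n}" and M: "M \<in> carrier_mat n m"
  shows "perm_mat n f * M = mat n m (\<lambda>(i, j). M $$ (f i, j))"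
proof (rule eq_matI)
  fix i j assume "i < dim_row (mat n m (\<lambda>(i, j). M $$ (f i, j)))"
    and "j < dim_col (mat n m (\<lambda>(i, j). M $$ (f i, j)))"
  then have i: "i < n" and j: "j < m" by auto
  with f have fi: "f i < n" by auto
  have "(perm_mat n f * M) $$ (i, j) = unit_vec n (f i) \<bullet> col M j"
    using i j M by (simp add: row_perm_mat)
  also have "\<dots> = M $$ (f i, j)"
    using scalar_prod_left_unit[of "col M j" n "f i"] M j fi by simp
  finally show "(perm_mat n f * M) $$ (i, j) = mat n m (\<lambda>(i, j). M $$ (f i, j)) $$ (i, j)"
    using i j by simp
qed (use M in auto)

lemma perm_mat_mult_vec:
  assumes f: "f ` {..<n} \<subseteq> {..<n}" and x: "x \<in> carrier_vec n"
  shows "perm_mat n f *\<^sub>v x = vec n (\<lambda>i. x $ f i)"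
proof (rule eq_vecI)
  fix i assume "i < dim_vec (vec n (\<lambda>i. x $ f i))"
  then have i: "i < n" by simp
  with f have "f i < n" by auto
  then show "(perm_mat n f *\<^sub>v x) $ i = vec n (\<lambda>i. x $ f i) $ i"
    using i x by (simp add: row_perm_mat scalar_prod_left_unit)
qed simp

lemma perm_mat_mult_perm_mat:
  assumes "f ` {..<n} \<subseteq> {..<n}"
  shows "perm_mat n f * perm_mat n g = (perm_mat n (g \<circ> f) :: 'a :: semiring_1 mat)"
  unfolding perm_mat_mult_mat[OF assms perm_mat_carrier]
  using assms by (intro eq_matI) (auto simp: perm_mat_def)

lemma invertible_mat_iff_Units:
  fixes A :: "'a :: semiring_1 mat"
  assumes A: "A \<in> carrier_mat n n"
  shows "invertible_mat A \<longleftrightarrow> A \<in> Units (ring_mat TYPE('a) n b)"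
proof
  assume "invertible_mat A"
  then obtain B where AB: "A * B = 1\<^sub>m n" and BA: "B * A = 1\<^sub>m (dim_row B)"
    using A unfolding invertible_mat_def inverts_mat_def by auto
  have "B \<in> carrier_mat n n"
    using arg_cong[OF AB, of dim_col] arg_cong[OF BA, of dim_col] A by auto
  with AB BA A show "A \<in> Units (ring_mat TYPE('a) n b)"
    unfolding Units_def ring_mat_def by auto
next
  assume "A \<in> Units (ring_mat TYPE('a) n b)"
  then obtain B where "B \<in> carrier_mat n n" "B * A = 1\<^sub>m n" "A * B = 1\<^sub>m n"
    unfolding Units_def ring_mat_def by auto
  with A show "invertible_mat A"
    unfolding invertible_mat_def inverts_mat_def square_mat.simps by auto
qed

lemma invertible_mat_mult:
  fixes A B :: "'a :: semiring_1 mat"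
  assumes "A \<in> carrier_mat n n" "B \<in> carrier_mat n n" "invertible_mat A" "invertible_mat B"
  shows "invertible_mat (A * B)"
proof -
  interpret semiring "ring_mat TYPE('a) n ()" by (rule semiring_mat)
  have "A * B \<in> Units (ring_mat TYPE('a) n ())"
    using assms Units_m_closed[of A B] invertible_mat_iff_Units[of A n "()"] invertible_mat_iff_Units[of B n "()"]
    by (simp add: ring_mat_simps)
  then show ?thesis
    using assms invertible_mat_iff_Units[of "A * B" n "()"] by simp
qed

lemma invertible_perm_mat:
  assumes f: "bij_betw f {..<n} {..<n}"
  shows "invertible_mat (perm_mat n f :: 'a :: semiring_1 mat)"
proof -
  define g where "g = inv_into {..<n} f"
  have g: "bij_betw g {..<n} {..<n}" unfolding g_def using bij_betw_inv_into[OF f] .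
  have "perm_mat n f * perm_mat n g = (perm_mat n (g \<circ> f) :: 'a mat)"
    "perm_mat n g * perm_mat n f = (perm_mat n (f \<circ> g) :: 'a mat)"
    using f g by (auto intro!: perm_mat_mult_perm_mat simp: bij_betw_def)
  moreover have "perm_mat n (g \<circ> f) = (1\<^sub>m n :: 'a mat)" "perm_mat n (f \<circ> g) = (1\<^sub>m n :: 'a mat)"
    using bij_betw_inv_into_left[OF f] bij_betw_inv_into_right[OF f]
    by (auto intro!: eq_matI simp: perm_mat_def g_def)
  ultimately show ?thesis
    unfolding invertible_mat_def inverts_mat_def square_mat.simps
    by (auto simp: perm_mat_def)
qed

definition cycle_adj :: "nat \<Rightarrow> nat \<Rightarrow> nat \<Rightarrow> bool" where
  "cycle_adj n i j \<longleftrightarrow> j = Suc i mod n \<or> i = Suc j mod n"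

lemma all_less_Suc_mod_iff:
  assumes "0 < n"
  shows "(\<forall>i<n. P i (Suc i mod n)) \<longleftrightarrow> (\<forall>i. Suc i < n \<longrightarrow> P i (Suc i)) \<and> P (n - 1) 0"
proof
  assume P: "\<forall>i<n. P i (Suc i mod n)"
  have "P i (Suc i)" if "Suc i < n" for i
    using P[rule_format, of i] that by simp
  moreover have "P (n - 1) 0"
    using P[rule_format, of "n - 1"] assms by simp
  ultimately show "(\<forall>i. Suc i < n \<longrightarrow> P i (Suc i)) \<and> P (n - 1) 0" by blast
next
  assume P: "(\<forall>i. Suc i < n \<longrightarrow> P i (Suc i)) \<and> P (n - 1) 0"
  show "\<forall>i<n. P i (Suc i mod n)"
  proof (intro allI impI)
    fix i assume i: "i < n"
    show "P i (Suc i mod n)"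
    proof (cases "Suc i < n")
      case False
      with i have "Suc i = n" by simp
      then have "i = n - 1" "Suc i mod n = 0" by auto
      with P show ?thesis by simp
    qed (use P in simp)
  qed
qed

lemma all_cycle_adj_iff:
  assumes n: "0 < n" and Q: "\<And>i j. Q i j \<longleftrightarrow> Q j i"
  shows "(\<forall>i<n. \<forall>j<n. cycle_adj n i j \<longrightarrow> Q i j) \<longleftrightarrow> (\<forall>i<n. Q i (Suc i mod n))"
proof
  assume Q_adj: "\<forall>i<n. \<forall>j<n. cycle_adj n i j \<longrightarrow> Q i j"
  show "\<forall>i<n. Q i (Suc i mod n)"
  proof (intro allI impI)
    fix i assume "i < n"
    moreover have "Suc i mod n < n" using n by simp
    moreover have "cycle_adj n i (Suc i mod n)" by (simp add: cycle_adj_def)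
    ultimately show "Q i (Suc i mod n)" using Q_adj by blast
  qed
next
  assume Q_Suc: "\<forall>i<n. Q i (Suc i mod n)"
  show "\<forall>i<n. \<forall>j<n. cycle_adj n i j \<longrightarrow> Q i j"
  proof (intro allI impI)
    fix i j assume "i < n" "j < n" "cycle_adj n i j"
    then show "Q i j"
      unfolding cycle_adj_def using Q_Suc Q[of i j] by auto
  qed
qed

lemma lucas_cube_iff_cycle_adj:
  assumes n: "0 < n"
  shows "x \<in> lucas_cube n \<longleftrightarrow>
    dim_vec x = n \<and> (\<forall>i<n. \<forall>j<n. cycle_adj n i j \<longrightarrow> \<not> (x $ i = 1 \<and> x $ j = 1))"
proof -
  have "(\<forall>i<n. \<forall>j<n. cycle_adj n i j \<longrightarrow> \<not> (x $ i = 1 \<and> x $ j = 1)) \<longleftrightarrow>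
      (\<forall>i<n. \<not> (x $ i = 1 \<and> x $ (Suc i mod n) = 1))" (is "?adj \<longleftrightarrow> _")
    by (rule all_cycle_adj_iff[OF n]) auto
  also have "\<dots> \<longleftrightarrow> (\<forall>i. i + 1 < n \<longrightarrow> \<not> (x $ i = 1 \<and> x $ (i + 1) = 1))
      \<and> \<not> (x $ 0 = 1 \<and> x $ (n - 1) = 1)" (is "_ \<longleftrightarrow> ?lucas")
    using all_less_Suc_mod_iff[OF n, of "\<lambda>i j. \<not> (x $ i = 1 \<and> x $ j = 1)"]
    by (simp only: Suc_eq_plus1 conj_commute)
  finally have "?adj \<longleftrightarrow> ?lucas" .
  then show ?thesis unfolding lucas_cube_def mem_Collect_eq by (simp only:)
qed

lemma vec_reindex_in_lucas_cube:
  assumes n: "0 < n" and x: "x \<in> lucas_cube n" and f: "f ` {..<n} \<subseteq> {..<n}"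
    and adj: "\<And>i j. i < n \<Longrightarrow> j < n \<Longrightarrow> cycle_adj n i j \<Longrightarrow> cycle_adj n (f i) (f j)"
  shows "vec n (\<lambda>i. x $ f i) \<in> lucas_cube n"
proof -
  have "\<not> (x $ f i = 1 \<and> x $ f j = 1)" if "i < n" "j < n" "cycle_adj n i j" for i j
    using x f adj[OF that] that unfolding lucas_cube_iff_cycle_adj[OF n] by auto
  then show ?thesis unfolding lucas_cube_iff_cycle_adj[OF n] by simp
qed

lemma lucas_cube_carrier_vec: "x \<in> lucas_cube n \<Longrightarrow> x \<in> carrier_vec n"
  unfolding lucas_cube_def by (intro carrier_vecI) simp

lemma Ln_good_mult:
  assumes A: "Ln_good n A" and B: "Ln_good n B"
  shows "Ln_good n (A * B)"
proof -
  have carrier: "A \<in> carrier_mat n n" "B \<in> carrier_mat n n"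
    using A B by (simp_all add: Ln_good_def)
  have "(A * B) *\<^sub>v x \<in> lucas_cube n" if x: "x \<in> lucas_cube n" for x
  proof -
    have "(A * B) *\<^sub>v x = A *\<^sub>v (B *\<^sub>v x)"
      using carrier lucas_cube_carrier_vec[OF x] by (rule assoc_mult_mat_vec)
    then show ?thesis using A B x by (simp add: Ln_good_def)
  qed
  moreover have "invertible_mat (A * B)"
    using carrier A B by (intro invertible_mat_mult) (simp_all add: Ln_good_def)
  ultimately show ?thesis using carrier by (simp add: Ln_good_def)
qed

lemma Ln_good_perm_mat:
  assumes n: "0 < n" and f: "bij_betw f {..<n} {..<n}"
    and adj: "\<And>i j. i < n \<Longrightarrow> j < n \<Longrightarrow> cycle_adj n i j \<Longrightarrow> cycle_adj n (f i) (f j)"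
  shows "Ln_good n (perm_mat n f)"
proof -
  have f_into: "f ` {..<n} \<subseteq> {..<n}" using f by (simp add: bij_betw_def)
  have "perm_mat n f *\<^sub>v x \<in> lucas_cube n" if "x \<in> lucas_cube n" for x
    using perm_mat_mult_vec[OF f_into lucas_cube_carrier_vec[OF that]]
      vec_reindex_in_lucas_cube[OF n that f_into adj]
    by simp
  then show ?thesis
    using invertible_perm_mat[OF f] by (simp add: Ln_good_def)
qed

definition shift_index :: "nat \<Rightarrow> int \<Rightarrow> nat \<Rightarrow> nat" where
  "shift_index n k i = nat ((int i + k) mod int n)"

lemma shift_index_less: "0 < n \<Longrightarrow> shift_index n k i < n"
  unfolding shift_index_def by (simp add: nat_less_iff)

lemma shift_index_shift_index: "0 < n \<Longrightarrow> shift_index n l (shift_index n k i) = shift_index n (k + l) i"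
  unfolding shift_index_def by simp (simp add: mod_add_right_eq ac_simps)

lemma shift_index_0: "i < n \<Longrightarrow> shift_index n 0 i = i"
  unfolding shift_index_def by simp

lemma shift_index_Suc_mod:
  assumes "0 < n"
  shows "shift_index n k (Suc i mod n) = Suc (shift_index n k i) mod n"
proof -
  have "int (shift_index n k (Suc i mod n)) = (int i + 1 + k) mod int n"
    using assms by (simp add: shift_index_def zmod_int) (simp add: mod_add_right_eq ac_simps)
  also have "\<dots> = int (Suc (shift_index n k i) mod n)"
    using assms by (simp add: shift_index_def zmod_int) (simp add: mod_add_right_eq ac_simps)
  finally show ?thesis by simp
qed

lemma bij_betw_shift_index:
  assumes "0 < n"
  shows "bij_betw (shift_index n k) {..<n} {..<n}"
  by (rule bij_betw_byWitness[where f' = "shift_index n (- k)"])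
    (use assms in \<open>auto simp: shift_index_shift_index shift_index_0 shift_index_less\<close>)

lemma cycle_adj_shift_index:
  "0 < n \<Longrightarrow> cycle_adj n i j \<Longrightarrow> cycle_adj n (shift_index n k i) (shift_index n k j)"
  unfolding cycle_adj_def by (auto simp: shift_index_Suc_mod)

lemma reflect_Suc_mod:
  assumes "i < n"
  shows "n - 1 - i = Suc (n - 1 - Suc i mod n) mod n"
proof (cases "Suc i < n")
  case False
  with assms have "Suc i = n" by simp
  then show ?thesis by simp
qed simp

lemma bij_betw_reflect: "bij_betw (\<lambda>i. n - 1 - i) {..<n} {..<n::nat}"
  by (rule bij_betw_byWitness[where f' = "\<lambda>i. n - 1 - i"]) auto

lemma cycle_adj_reflect:
  assumes "i < n" "j < n" "cycle_adj n i j"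
  shows "cycle_adj n (n - 1 - i) (n - 1 - j)"
  using assms reflect_Suc_mod[of i n] reflect_Suc_mod[of j n] unfolding cycle_adj_def by auto

lemma row_shift_eq_perm_mat:
  assumes "0 < n" "A \<in> carrier_mat n n"
  shows "row_shift n k A = perm_mat n (shift_index n k) * A"
proof -
  have "shift_index n k ` {..<n} \<subseteq> {..<n}" using assms(1) shift_index_less by blast
  from perm_mat_mult_mat[OF this assms(2)] show ?thesis
    unfolding row_shift_def shift_index_def by simp
qed

lemma antidiag_eq_perm_mat: "antidiag n = perm_mat n (\<lambda>i. n - 1 - i)"
  unfolding antidiag_def perm_mat_def ..

theorem corollary3:
  fixes n :: nat
  assumes "n \<ge> 2"
  shows "(\<forall>A k. Ln_good n A \<longrightarrow> Ln_good n (row_shift n k A)) \<and> Ln_good n (antidiag n)"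
proof
  have n: "0 < n" using assms by simp
  show "\<forall>A k. Ln_good n A \<longrightarrow> Ln_good n (row_shift n k A)"
  proof (intro allI impI)
    fix A k assume A: "Ln_good n A"
    have shift: "Ln_good n (perm_mat n (shift_index n k))"
      using Ln_good_perm_mat[OF n bij_betw_shift_index[OF n] cycle_adj_shift_index[OF n]] .
    have "A \<in> carrier_mat n n" using A by (simp add: Ln_good_def)
    then have "row_shift n k A = perm_mat n (shift_index n k) * A"
      by (rule row_shift_eq_perm_mat[OF n])
    then show "Ln_good n (row_shift n k A)"
      using Ln_good_mult[OF shift A] by simp
  qed
  from Ln_good_perm_mat[OF n bij_betw_reflect cycle_adj_reflect] show "Ln_good n (antidiag n)"
    unfolding antidiag_eq_perm_mat .
qed

end
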